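(* Let $\alpha_1,\dots,\alpha_K\in\mathbb R^d\setminus\{0\}$. (1) For every $\eta\in\mathbb R^d\setminus\{0\}$ there is a (possibly empty) subset $\{\alpha_{k_1},\dots,\alpha_{k_m}\}\subseteq\{\alpha_1,\dots,\alpha_K\}$ with $\mathcal H_\eta=\mathrm{span}\{\alpha_{k_1},\dots,\alpha_{k_m}\}$ (with $\mathcal H_\eta=\{0\}$ if empty) such that (i) $P_{\mathcal H_\eta}\eta=\sum_{p=1}^m\gamma_{k_p}\alpha_{k_p}$ for some $\gamma_{k_1},\dots,\gamma_{k_m}\ge0$; (ii) $\alpha_k^{T}P_{\mathcal H_\eta^\perp}\eta<0$ for every $k\notin\{k_1,\dots,k_m\}$; (iii) $P_{\mathcal H_\eta^\perp}\eta$ is uniquely determined by $\eta$ (independent of the choice of such a subset) and depends continuously on $\eta$; it is called the canonical projection of $\eta$ with respect to $\{\alpha_1,\dots,\alpha_K\}$. (2) Let $\omega_1,\dots,\omega_K>0$ and $\eta_n\in\mathbb R^d$ with $\eta_n/n\to\eta\ne0$. Let $f_n(\theta)=-\sum_{k=1}^K\omega_k\exp(\alpha_k^{T}\theta)+\eta_n^{T}\theta-\tfrac12\theta^{T}\theta$ with unique maximizer $\theta_n$. Then $\theta_n/n\to P_{\mathcal H_\eta^\perp}\eta$ and $f_n(\theta_n)/n^2\to\tfrac12\|P_{\mathcal H_\eta^\perp}\eta\|^2$.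
   Context: $P_{\mathcal H}$ denotes orthogonal projection onto a subspace $\mathcal H$ of $\mathbb R^d$ and $\mathcal H^\perp$ its orthogonal complement. *)

theory Defs
  imports "HOL-Analysis.Analysis"
begin

definition orth_proj :: "'a::euclidean_space set \<Rightarrow> 'a \<Rightarrow> 'a" where
  "orth_proj H x = (THE p. p \<in> H \<and> x - p \<in> orthogonal_comp H)"

text \<open>S (a subset of the indices {..<K}) is an admissible index set for eta w.r.t. alpha_0..alpha_(K-1):
  conditions (i) and (ii) of the statement, with H = span of the alpha_k, k in S.\<close>
definition admissible :: "(nat \<Rightarrow> 'a::euclidean_space) \<Rightarrow> nat \<Rightarrow> 'a \<Rightarrow> nat set \<Rightarrow> bool" where
  "admissible \<alpha> K \<eta> S \<longleftrightarrow>
     S \<subseteq> {..<K} \<and>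
     (\<exists>\<gamma>. (\<forall>k\<in>S. \<gamma> k \<ge> 0) \<and>
          orth_proj (span (\<alpha> ` S)) \<eta> = (\<Sum>k\<in>S. \<gamma> k *\<^sub>R \<alpha> k)) \<and>
     (\<forall>k\<in>{..<K} - S. \<alpha> k \<bullet> orth_proj (orthogonal_comp (span (\<alpha> ` S))) \<eta> < 0)"

definition canon_proj :: "(nat \<Rightarrow> 'a::euclidean_space) \<Rightarrow> nat \<Rightarrow> 'a \<Rightarrow> 'a" where
  "canon_proj \<alpha> K \<eta> =
     orth_proj (orthogonal_comp (span (\<alpha> ` (SOME S. admissible \<alpha> K \<eta> S)))) \<eta>"

end

theory Submission
  imports Defs
begin

text \<open>The hypotheses single out the polyhedral cone \<open>C = {x. \<forall>k. \<alpha>\<^sub>k \<bullet> x \<le> 0}\<close>, and the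
canonical projection of \<open>\<eta>\<close> is nothing but the metric projection of \<open>\<eta>\<close> onto \<open>C\<close>.
For an admissible \<open>S\<close>, the point \<open>w = P\<^bsub>H\<^sup>\<bottom>\<^esub> \<eta>\<close> lies in \<open>C\<close> and \<open>\<eta> - w\<close> is a nonnegative
combination of the \<open>\<alpha>\<^sub>k\<close>, \<open>k \<in> S\<close>, which is the variational characterisation of the closest
point; conversely, by Farkas' lemma the constraints active at the closest point form an admissible
set. Existence, uniqueness and continuity are thus inherited from the closest-point map.

For the asymptotics write \<open>\<theta>\<^sub>n = n x\<^sub>n\<close> and \<open>\<eta>\<^sub>n = n e\<^sub>n\<close>, and let \<open>v\<close> be the closest point. The
objective is 1-strongly concave, so comparing its values at \<open>\<theta>\<^sub>n\<close> and \<open>n v\<close> bounds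
\<open>|x\<^sub>n - v|\<^sup>2\<close> by \<open>O(1/n\<^sup>2) + |e\<^sub>n - \<eta>|\<^sup>2\<close> plus penalty terms
\<open>\<gamma>\<^sub>k \<alpha>\<^sub>k \<bullet> x\<^sub>n - \<omega>\<^sub>k exp (n \<alpha>\<^sub>k \<bullet> x\<^sub>n) / n\<^sup>2\<close>, each at most \<open>\<gamma>\<^sub>k ln (\<gamma>\<^sub>k n / \<omega>\<^sub>k) / n\<close>.\<close>

definition polar_cone :: "(nat \<Rightarrow> 'a::euclidean_space) \<Rightarrow> nat \<Rightarrow> 'a set" where
  "polar_cone \<alpha> K = {x. \<forall>k<K. \<alpha> k \<bullet> x \<le> 0}"

definition active_set :: "(nat \<Rightarrow> 'a::euclidean_space) \<Rightarrow> nat \<Rightarrow> 'a \<Rightarrow> nat set" where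
  "active_set \<alpha> K v = {k. k < K \<and> \<alpha> k \<bullet> v = 0}"

lemma closed_polar_cone: "closed (polar_cone \<alpha> K)"
proof -
  have "polar_cone \<alpha> K = (\<Inter>k<K. {x. \<alpha> k \<bullet> x \<le> 0})"
    by (auto simp: polar_cone_def)
  then show ?thesis by (simp add: closed_INT closed_halfspace_le)
qed

lemma convex_polar_cone: "convex (polar_cone \<alpha> K)"
  unfolding convex_def polar_cone_def
  by (auto simp: inner_add_right intro!: add_nonpos_nonpos mult_nonneg_nonpos)

lemma zero_in_polar_cone: "0 \<in> polar_cone \<alpha> K"
  by (simp add: polar_cone_def)

lemma finite_active_set: "finite (active_set \<alpha> K v)"
  by (simp add: active_set_def)

lemma active_set_subset: "active_set \<alpha> K v \<subseteq> {..<K}"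
  by (auto simp: active_set_def)

lemma orth_proj_eqI:
  fixes H :: "'a::euclidean_space set"
  assumes "subspace H" "p \<in> H" "x - p \<in> orthogonal_comp H"
  shows "orth_proj H x = p"
  unfolding orth_proj_def
proof (rule the_equality)
  show "p \<in> H \<and> x - p \<in> orthogonal_comp H" using assms by auto
next
  fix q assume q: "q \<in> H \<and> x - q \<in> orthogonal_comp H"
  have "q - p \<in> H" using q assms by (simp add: subspace_diff)
  moreover have "(x - p) - (x - q) \<in> orthogonal_comp H"
    using q assms subspace_diff subspace_orthogonal_comp by blast
  ultimately have "orthogonal (q - p) (q - p)"
    by (auto simp: orthogonal_comp_def)
  then show "q = p" by (simp add: orthogonal_def)
qed

lemma orth_proj_span_add:
  fixes B :: "'a::euclidean_space set"
  assumes u: "u \<in> span B" and w: "\<And>b. b \<in> B \<Longrightarrow> b \<bullet> w = 0"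
  shows "orth_proj (span B) (u + w) = u"
    and "orth_proj (orthogonal_comp (span B)) (u + w) = w"
proof -
  have wB: "w \<in> orthogonal_comp (span B)"
    using orthogonal_to_span[of _ B w] w
    by (auto simp: orthogonal_comp_def orthogonal_def inner_commute)
  show "orth_proj (span B) (u + w) = u"
    by (rule orth_proj_eqI) (use u wB in auto)
  show "orth_proj (orthogonal_comp (span B)) (u + w) = w"
    by (rule orth_proj_eqI) (use u wB orthogonal_comp_subset subspace_orthogonal_comp in auto)
qed

lemma closest_point_eqI:
  fixes S :: "'a::euclidean_space set"
  assumes "convex S" "closed S" "v \<in> S" and dot: "\<And>y. y \<in> S \<Longrightarrow> (a - v) \<bullet> (y - v) \<le> 0"
  shows "closest_point S a = v"
proof -
  have "dist a v \<le> dist a y" if "y \<in> S" for y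
  proof -
    have "(dist a y)\<^sup>2 = (dist a v)\<^sup>2 + (norm (y - v))\<^sup>2 - 2 * ((a - v) \<bullet> (y - v))"
      by (simp add: dist_norm power2_norm_eq_inner inner_diff_left inner_diff_right inner_commute)
    then have "(dist a v)\<^sup>2 \<le> (dist a y)\<^sup>2"
      using dot[OF that] zero_le_power2[of "norm (y - v)"] by linarith
    then show ?thesis by (simp add: power2_le_iff_abs_le)
  qed
  then show ?thesis using closest_point_unique[OF assms(1-3)] by metis
qed

lemma convex_cone_hull_subset_nonneg_combinations:
  fixes \<alpha> :: "nat \<Rightarrow> 'a::euclidean_space"
  assumes "finite A"
  shows "convex_cone hull (\<alpha> ` A) \<subseteq> {(\<Sum>k\<in>A. \<gamma> k *\<^sub>R \<alpha> k) | \<gamma>. \<forall>k\<in>A. \<gamma> k \<ge> 0}"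
    (is "_ \<subseteq> ?C")
proof (rule hull_minimal)
  show "\<alpha> ` A \<subseteq> ?C"
  proof
    fix x assume "x \<in> \<alpha> ` A"
    then obtain j where j: "j \<in> A" "x = \<alpha> j" by auto
    have "(\<Sum>k\<in>A. (if k = j then 1 else 0) *\<^sub>R \<alpha> k) = \<alpha> j"
      using j assms by (simp add: if_distrib[of "\<lambda>c. c *\<^sub>R _"] cong: if_cong)
    then show "x \<in> ?C"
      using j by (intro CollectI exI[of _ "\<lambda>k. if k = j then 1 else 0"]) auto
  qed
  show "convex_cone ?C"
    unfolding convex_cone_iff
  proof (intro conjI ballI allI impI)
    show "0 \<in> ?C" by (intro CollectI exI[of _ "\<lambda>k. 0"]) auto
  next
    fix x y assume "x \<in> ?C" "y \<in> ?C"
    then obtain g h where "x = (\<Sum>k\<in>A. g k *\<^sub>R \<alpha> k)" "\<forall>k\<in>A. g k \<ge> 0"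
       "y = (\<Sum>k\<in>A. h k *\<^sub>R \<alpha> k)" "\<forall>k\<in>A. h k \<ge> 0" by auto
    then show "x + y \<in> ?C"
      by (intro CollectI exI[of _ "\<lambda>k. g k + h k"]) (auto simp: sum.distrib scaleR_add_left)
  next
    fix x and c :: real assume "x \<in> ?C" "0 \<le> c"
    then obtain g where "x = (\<Sum>k\<in>A. g k *\<^sub>R \<alpha> k)" "\<forall>k\<in>A. g k \<ge> 0" by auto
    then show "c *\<^sub>R x \<in> ?C"
      using \<open>0 \<le> c\<close> by (intro CollectI exI[of _ "\<lambda>k. c * g k"]) (auto simp: scaleR_sum_right)
  qed
qed

lemma farkas_lemma:
  fixes \<alpha> :: "nat \<Rightarrow> 'a::euclidean_space"
  assumes "finite A" and dual: "\<And>d. (\<And>k. k \<in> A \<Longrightarrow> \<alpha> k \<bullet> d \<le> 0) \<Longrightarrow> u \<bullet> d \<le> 0"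
  shows "\<exists>\<gamma>. (\<forall>k\<in>A. \<gamma> k \<ge> 0) \<and> u = (\<Sum>k\<in>A. \<gamma> k *\<^sub>R \<alpha> k)"
proof -
  let ?D = "convex_cone hull (\<alpha> ` A)"
  have "u \<in> ?D"
  proof (rule ccontr)
    assume "u \<notin> ?D"
    then obtain a b where ab: "a \<bullet> u < b" "\<forall>x\<in>?D. b < a \<bullet> x"
      using separating_hyperplane_closed_point convex_convex_cone_hull
        closed_convex_cone_hull \<open>finite A\<close> by (metis finite_imageI)
    have "b < 0" using ab(2) convex_cone_hull_contains_0 by fastforce
    have "0 \<le> a \<bullet> \<alpha> k" if "k \<in> A" for k
    proof (rule ccontr)
      assume neg: "\<not> 0 \<le> a \<bullet> \<alpha> k"
      have "(b / (a \<bullet> \<alpha> k)) *\<^sub>R \<alpha> k \<in> ?D"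
        using neg \<open>b < 0\<close> that by (intro convex_cone_hull_mul hull_inc) (auto intro: divide_nonpos_neg)
      then show False using ab(2) neg by fastforce
    qed
    then have "u \<bullet> (- a) \<le> 0" by (intro dual) (simp add: inner_commute)
    then show False using ab \<open>b < 0\<close> by (simp add: inner_commute)
  qed
  then show ?thesis
    using convex_cone_hull_subset_nonneg_combinations[OF \<open>finite A\<close>, of \<alpha>] by auto
qed

lemma polar_cone_feasible_direction:
  fixes \<alpha> :: "nat \<Rightarrow> 'a::euclidean_space"
  assumes v: "v \<in> polar_cone \<alpha> K" and d: "\<And>k. k \<in> active_set \<alpha> K v \<Longrightarrow> \<alpha> k \<bullet> d \<le> 0"
  obtains t :: real where "t > 0" "v + t *\<^sub>R d \<in> polar_cone \<alpha> K"
proof -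
  have ev: "\<forall>\<^sub>F t in at_right (0::real). t > 0 \<and> (\<forall>k\<in>{..<K}. \<alpha> k \<bullet> v + t * (\<alpha> k \<bullet> d) \<le> 0)"
  proof (intro eventually_conj eventually_ball_finite ballI)
    fix k assume k: "k \<in> {..<K}"
    show "\<forall>\<^sub>F t in at_right 0. \<alpha> k \<bullet> v + t * (\<alpha> k \<bullet> d) \<le> 0"
    proof (cases "k \<in> active_set \<alpha> K v")
      case True
      then show ?thesis using d[OF True]
        by (auto simp: active_set_def mult_nonneg_nonpos intro!: eventually_mono[OF eventually_at_right_less])
    next
      case False
      then have "\<alpha> k \<bullet> v < 0" using v k by (force simp: active_set_def polar_cone_def)
      moreover have "((\<lambda>t. \<alpha> k \<bullet> v + t * (\<alpha> k \<bullet> d)) \<longlongrightarrow> \<alpha> k \<bullet> v + 0 * (\<alpha> k \<bullet> d)) (at_right 0)"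
        by (intro tendsto_intros tendsto_ident_at)
      ultimately have "\<forall>\<^sub>F t in at_right 0. \<alpha> k \<bullet> v + t * (\<alpha> k \<bullet> d) < 0"
        by (intro order_tendstoD) auto
      then show ?thesis by (rule eventually_mono) simp
    qed
  qed (simp_all add: eventually_at_right_less)
  obtain t :: real where "t > 0" "\<forall>k<K. \<alpha> k \<bullet> v + t * (\<alpha> k \<bullet> d) \<le> 0"
    using eventually_happens[OF ev] by auto
  then show thesis by (intro that) (auto simp: polar_cone_def inner_add_right)
qed

lemma closest_point_in_polar_cone: "closest_point (polar_cone \<alpha> K) \<eta> \<in> polar_cone \<alpha> K"
  by (intro closest_point_in_set closed_polar_cone) (use zero_in_polar_cone in auto)

lemma closest_point_polar_cone_residual:
  fixes \<alpha> :: "nat \<Rightarrow> 'a::euclidean_space" and K :: nat and \<eta> :: 'a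
  defines "v \<equiv> closest_point (polar_cone \<alpha> K) \<eta>"
  shows "\<exists>\<gamma>. (\<forall>k\<in>active_set \<alpha> K v. \<gamma> k \<ge> 0) \<and> \<eta> - v = (\<Sum>k\<in>active_set \<alpha> K v. \<gamma> k *\<^sub>R \<alpha> k)"
proof (rule farkas_lemma[OF finite_active_set])
  fix d assume "\<And>k. k \<in> active_set \<alpha> K v \<Longrightarrow> \<alpha> k \<bullet> d \<le> 0"
  moreover have "v \<in> polar_cone \<alpha> K"
    unfolding v_def by (rule closest_point_in_polar_cone)
  ultimately obtain t :: real where "t > 0" "v + t *\<^sub>R d \<in> polar_cone \<alpha> K"
    using polar_cone_feasible_direction by blast
  then have "(\<eta> - v) \<bullet> ((v + t *\<^sub>R d) - v) \<le> 0"
    unfolding v_def by (intro closest_point_dot convex_polar_cone closed_polar_cone)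
  then show "(\<eta> - v) \<bullet> d \<le> 0" using \<open>t > 0\<close> by (simp add: mult_le_0_iff)
qed

lemma closest_point_polar_cone_orthogonal:
  fixes \<alpha> :: "nat \<Rightarrow> 'a::euclidean_space" and K :: nat and \<eta> :: 'a
  defines "v \<equiv> closest_point (polar_cone \<alpha> K) \<eta>"
  shows "(\<eta> - v) \<bullet> v = 0"
proof -
  obtain \<gamma> where "\<eta> - v = (\<Sum>k\<in>active_set \<alpha> K v. \<gamma> k *\<^sub>R \<alpha> k)"
    using closest_point_polar_cone_residual unfolding v_def by blast
  then show ?thesis by (simp add: inner_sum_left active_set_def)
qed

lemma admissible_orth_proj_eq_closest_point:
  fixes \<alpha> :: "nat \<Rightarrow> 'a::euclidean_space"
  assumes "admissible \<alpha> K \<eta> S"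
  shows "orth_proj (orthogonal_comp (span (\<alpha> ` S))) \<eta> = closest_point (polar_cone \<alpha> K) \<eta>"
proof -
  obtain p w where p: "p \<in> span (\<alpha> ` S)" and w: "\<And>b. b \<in> span (\<alpha> ` S) \<Longrightarrow> orthogonal w b"
    and "p + w = \<eta>"
    using orthogonal_subspace_decomp_exists by metis
  then have \<eta>: "\<eta> = p + w" by simp
  have w\<alpha>: "b \<bullet> w = 0" if "b \<in> \<alpha> ` S" for b
    using w[of b] that by (auto simp: orthogonal_def inner_commute intro: span_base)
  note proj = orth_proj_span_add[OF p w\<alpha>, folded \<eta>]
  from assms obtain \<gamma> where "S \<subseteq> {..<K}" and \<gamma>: "\<forall>k\<in>S. \<gamma> k \<ge> 0"
    and p_eq: "p = (\<Sum>k\<in>S. \<gamma> k *\<^sub>R \<alpha> k)" and out: "\<forall>k\<in>{..<K} - S. \<alpha> k \<bullet> w < 0"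
    by (auto simp: admissible_def proj)
  have "closest_point (polar_cone \<alpha> K) \<eta> = w"
  proof (rule closest_point_eqI[OF convex_polar_cone closed_polar_cone])
    show "w \<in> polar_cone \<alpha> K"
      using w\<alpha> out by (force simp: polar_cone_def)
    fix y assume "y \<in> polar_cone \<alpha> K"
    have "p \<bullet> w = 0" using w[OF p] by (simp add: orthogonal_def inner_commute)
    then have "(\<eta> - w) \<bullet> (y - w) = p \<bullet> y"
      by (simp add: \<eta> inner_diff_right)
    also have "\<dots> = (\<Sum>k\<in>S. \<gamma> k * (\<alpha> k \<bullet> y))"
      by (simp add: p_eq inner_sum_left)
    also have "\<dots> \<le> 0"
      using \<open>y \<in> polar_cone \<alpha> K\<close> \<open>S \<subseteq> {..<K}\<close> \<gamma>
      by (intro sum_nonpos) (auto simp: polar_cone_def intro: mult_nonneg_nonpos)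
    finally show "(\<eta> - w) \<bullet> (y - w) \<le> 0" .
  qed
  then show ?thesis using proj by simp
qed

lemma admissible_active_set:
  fixes \<alpha> :: "nat \<Rightarrow> 'a::euclidean_space" and K :: nat and \<eta> :: 'a
  defines "v \<equiv> closest_point (polar_cone \<alpha> K) \<eta>"
  shows "admissible \<alpha> K \<eta> (active_set \<alpha> K v)"
proof -
  let ?A = "active_set \<alpha> K v"
  obtain \<gamma> where \<gamma>: "\<forall>k\<in>?A. \<gamma> k \<ge> 0" and res: "\<eta> - v = (\<Sum>k\<in>?A. \<gamma> k *\<^sub>R \<alpha> k)"
    using closest_point_polar_cone_residual unfolding v_def by blast
  have "\<eta> - v \<in> span (\<alpha> ` ?A)"
    unfolding res by (intro span_sum span_mul span_base) auto
  moreover have "b \<bullet> v = 0" if "b \<in> \<alpha> ` ?A" for b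
    using that by (auto simp: active_set_def)
  ultimately have proj: "orth_proj (span (\<alpha> ` ?A)) \<eta> = \<eta> - v"
    "orth_proj (orthogonal_comp (span (\<alpha> ` ?A))) \<eta> = v"
    using orth_proj_span_add[of "\<eta> - v" "\<alpha> ` ?A" v] by simp_all
  have "v \<in> polar_cone \<alpha> K"
    unfolding v_def by (rule closest_point_in_polar_cone)
  then show ?thesis
    unfolding admissible_def proj
    using \<gamma> res active_set_subset by (auto simp: active_set_def polar_cone_def order_less_le)
qed

lemma canon_proj_eq_closest_point:
  fixes \<alpha> :: "nat \<Rightarrow> 'a::euclidean_space"
  shows "canon_proj \<alpha> K = closest_point (polar_cone \<alpha> K)"
proof
  fix \<eta>
  have "admissible \<alpha> K \<eta> (SOME S. admissible \<alpha> K \<eta> S)"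
    using admissible_active_set by (rule someI)
  then show "canon_proj \<alpha> K \<eta> = closest_point (polar_cone \<alpha> K) \<eta>"
    unfolding canon_proj_def by (rule admissible_orth_proj_eq_closest_point)
qed

definition exp_objective :: "(nat \<Rightarrow> real) \<Rightarrow> (nat \<Rightarrow> 'a::euclidean_space) \<Rightarrow> nat \<Rightarrow> 'a \<Rightarrow> 'a \<Rightarrow> real" where
  "exp_objective \<omega> \<alpha> K e x = - (\<Sum>k<K. \<omega> k * exp (\<alpha> k \<bullet> x)) + e \<bullet> x - (1/2) * (x \<bullet> x)"

lemma convex_on_exp_inner: "convex_on UNIV (\<lambda>x. exp (a \<bullet> x))"
proof (rule convex_onI)
  fix t :: real and x y :: 'a assume "0 < t" "t < 1"
  then show "exp (a \<bullet> ((1 - t) *\<^sub>R x + t *\<^sub>R y)) \<le> (1 - t) * exp (a \<bullet> x) + t * exp (a \<bullet> y)"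
    using convex_onD[OF exp_convex, of t "a \<bullet> x" "a \<bullet> y"] by (simp add: inner_add_right)
qed simp

lemma concave_on_neg_sum_exp_inner:
  fixes \<omega> :: "nat \<Rightarrow> real" and \<alpha> :: "nat \<Rightarrow> 'a::real_inner"
  assumes "\<And>k. k < K \<Longrightarrow> \<omega> k \<ge> 0"
  shows "concave_on UNIV (\<lambda>x. - (\<Sum>k<K. \<omega> k * exp (\<alpha> k \<bullet> x)))"
proof -
  have "convex_on UNIV (\<lambda>x. \<Sum>k<K. \<omega> k * exp (\<alpha> k \<bullet> x))"
    using assms
    by (induction K) (auto intro!: convex_on_add convex_on_cmul convex_on_exp_inner simp: convex_on_const)
  then show ?thesis by (simp add: concave_on_def)
qed

lemma concave_quadratic_maximizer_gap:
  fixes \<phi> :: "'a::real_inner \<Rightarrow> real" and e :: 'a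
  defines "F \<equiv> \<lambda>x. \<phi> x + e \<bullet> x - (1/2) * (x \<bullet> x)"
  assumes "concave_on UNIV \<phi>" and max: "\<And>x. F x \<le> F \<theta>"
  shows "F y + (1/2) * (norm (y - \<theta>))\<^sup>2 \<le> F \<theta>"
proof -
  \<comment> \<open>compare \<open>F \<theta>\<close> with \<open>F\<close> at a point of the segment from \<open>\<theta>\<close> to \<open>y\<close>, then let it approach \<open>\<theta>\<close>\<close>
  have "z * ((1/2) * (norm (y - \<theta>))\<^sup>2) \<le> F \<theta> - F y" if "0 < z" "z < 1" for z
  proof -
    define t where "t = 1 - z"
    have t: "0 < t" "t < 1" using that by (auto simp: t_def)
    define p where "p = (1 - t) *\<^sub>R \<theta> + t *\<^sub>R y"
    have "(1 - t) * \<phi> \<theta> + t * \<phi> y \<le> \<phi> p"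
      unfolding p_def using concave_onD[OF assms(2)] t by simp
    moreover have "e \<bullet> p - (1/2) * (p \<bullet> p) = (1 - t) * (e \<bullet> \<theta> - (1/2) * (\<theta> \<bullet> \<theta>))
        + t * (e \<bullet> y - (1/2) * (y \<bullet> y)) + t * (1 - t) * ((1/2) * (norm (y - \<theta>))\<^sup>2)"
      unfolding p_def power2_norm_eq_inner
      by (simp add: inner_add_left inner_add_right inner_diff_left inner_diff_right inner_commute
          algebra_simps) (simp add: field_simps)
    ultimately have "(1 - t) * F \<theta> + t * F y + t * (1 - t) * ((1/2) * (norm (y - \<theta>))\<^sup>2) \<le> F p"
      unfolding F_def by (simp add: algebra_simps)
    with max[of p] have "t * (z * ((1/2) * (norm (y - \<theta>))\<^sup>2)) \<le> t * (F \<theta> - F y)"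
      by (simp add: t_def algebra_simps)
    then show ?thesis using t by simp
  qed
  then show ?thesis using field_le_mult_one_interval by (metis le_diff_eq add.commute)
qed

lemma exp_objective_maximizer_gap:
  fixes \<alpha> :: "nat \<Rightarrow> 'a::euclidean_space"
  assumes "\<And>k. k < K \<Longrightarrow> \<omega> k \<ge> 0" and "\<And>x. exp_objective \<omega> \<alpha> K e x \<le> exp_objective \<omega> \<alpha> K e \<theta>"
  shows "exp_objective \<omega> \<alpha> K e y + (1/2) * (norm (y - \<theta>))\<^sup>2 \<le> exp_objective \<omega> \<alpha> K e \<theta>"
  using concave_quadratic_maximizer_gap[OF concave_on_neg_sum_exp_inner, of K \<omega> \<alpha> e \<theta> y] assms
  by (simp add: exp_objective_def)

lemma exp_penalty_le:
  fixes \<gamma> \<omega> N s :: real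
  assumes "\<gamma> \<ge> 0" "\<omega> > 0" "N > 0"
  shows "\<gamma> * s - \<omega> * exp (N * s) / N\<^sup>2 \<le> \<gamma> * ln (\<gamma> * N / \<omega>) / N"
proof (cases "\<gamma> = 0")
  case True
  then show ?thesis using assms by simp
next
  case False
  define c where "c = \<gamma> * N / \<omega>"
  have c: "c > 0" using False assms by (simp add: c_def)
  \<comment> \<open>tangent line of \<open>exp\<close> at \<open>ln c\<close>\<close>
  have "c * (1 + N * s - ln c) \<le> c * exp (N * s - ln c)"
  proof (rule mult_left_mono)
    show "1 + N * s - ln c \<le> exp (N * s - ln c)"
      using exp_ge_add_one_self[of "N * s - ln c"] by linarith
  qed (use c in simp)
  also have "\<dots> = exp (N * s)" using c by (simp add: exp_diff)
  finally have "\<omega> * (c * (1 + N * s - ln c)) / N\<^sup>2 \<le> \<omega> * exp (N * s) / N\<^sup>2"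
    using assms by (intro divide_right_mono mult_left_mono) auto
  moreover have "\<omega> * (c * (1 + N * s - ln c)) / N\<^sup>2 = \<gamma> / N + \<gamma> * s - \<gamma> * ln c / N"
    using assms by (simp add: c_def power2_eq_square field_simps)
  moreover have "\<gamma> / N \<ge> 0" using assms by simp
  ultimately show ?thesis unfolding c_def by linarith
qed

lemma exp_penalty_bound_tendsto_zero:
  fixes \<gamma> \<omega> :: real
  assumes "\<gamma> \<ge> 0" "\<omega> > 0"
  shows "(\<lambda>n. \<gamma> * ln (\<gamma> * real n / \<omega>) / real n) \<longlonglongrightarrow> 0"
proof (cases "\<gamma> = 0")
  case False
  then have "\<gamma> / \<omega> > 0" using assms by simp
  have "(\<lambda>n. \<gamma> * (ln (\<gamma> / \<omega>) / real n + ln (real n) / real n)) \<longlonglongrightarrow> \<gamma> * (0 + 0)"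
    by (intro tendsto_intros lim_ln_over_n)
  moreover have "\<forall>\<^sub>F n in sequentially.
      \<gamma> * (ln (\<gamma> / \<omega>) / real n + ln (real n) / real n) = \<gamma> * ln (\<gamma> * real n / \<omega>) / real n"
    using eventually_gt_at_top[of 0]
  proof eventually_elim
    case (elim n)
    then have "ln (\<gamma> * real n / \<omega>) = ln (\<gamma> / \<omega>) + ln (real n)"
      using ln_mult[of "\<gamma> / \<omega>" "real n"] \<open>\<gamma> / \<omega> > 0\<close> False assms by simp
    then show ?case by (simp add: add_divide_distrib ring_distribs)
  qed
  ultimately show ?thesis by (simp add: Lim_transform_eventually)
qed simp

lemma exp_objective_scaleR:
  "exp_objective \<omega> \<alpha> K (N *\<^sub>R e) (N *\<^sub>R x)
     = - (\<Sum>k<K. \<omega> k * exp (N * (\<alpha> k \<bullet> x))) + N\<^sup>2 * (e \<bullet> x - (1/2) * (x \<bullet> x))"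
  by (simp add: exp_objective_def power2_eq_square algebra_simps)

lemma exp_objective_scaleR_le:
  assumes "\<And>k. k < K \<Longrightarrow> \<omega> k \<ge> 0"
  shows "exp_objective \<omega> \<alpha> K (N *\<^sub>R e) (N *\<^sub>R x) \<le> N\<^sup>2 * (e \<bullet> x - (1/2) * (x \<bullet> x))"
proof -
  have "0 \<le> (\<Sum>k<K. \<omega> k * exp (N * (\<alpha> k \<bullet> x)))"
    using assms by (intro sum_nonneg) simp
  then show ?thesis by (simp add: exp_objective_scaleR)
qed

lemma exp_objective_scaleR_polar_cone_ge:
  assumes "\<And>k. k < K \<Longrightarrow> \<omega> k \<ge> 0" and "N \<ge> 0" and "v \<in> polar_cone \<alpha> K"
  shows "- (\<Sum>k<K. \<omega> k) + N\<^sup>2 * (e \<bullet> v - (1/2) * (v \<bullet> v)) \<le> exp_objective \<omega> \<alpha> K (N *\<^sub>R e) (N *\<^sub>R v)"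
proof -
  have "(\<Sum>k<K. \<omega> k * exp (N * (\<alpha> k \<bullet> v))) \<le> (\<Sum>k<K. \<omega> k)"
  proof (rule sum_mono)
    fix k assume "k \<in> {..<K}"
    then have "exp (N * (\<alpha> k \<bullet> v)) \<le> 1"
      using assms by (simp add: polar_cone_def mult_nonneg_nonpos)
    then show "\<omega> k * exp (N * (\<alpha> k \<bullet> v)) \<le> \<omega> k"
      using assms(1) \<open>k \<in> {..<K}\<close> by (simp add: mult_left_le)
  qed
  then show ?thesis by (simp add: exp_objective_scaleR)
qed

lemma scaled_maximizer_sq_dist_le:
  fixes \<alpha> :: "nat \<Rightarrow> 'a::euclidean_space"
  assumes \<omega>: "\<And>k. k < K \<Longrightarrow> \<omega> k \<ge> 0" and "N \<ge> 0"
    and max: "\<And>y. exp_objective \<omega> \<alpha> K (N *\<^sub>R e) y \<le> exp_objective \<omega> \<alpha> K (N *\<^sub>R e) (N *\<^sub>R x)"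
    and v: "v \<in> polar_cone \<alpha> K" and A: "A \<subseteq> active_set \<alpha> K v"
    and res: "\<eta> - v = (\<Sum>k\<in>A. \<gamma> k *\<^sub>R \<alpha> k)"
  shows "N\<^sup>2 * (norm (x - v))\<^sup>2 + (\<Sum>k\<in>A. \<omega> k * exp (N * (\<alpha> k \<bullet> x)))
           \<le> (\<Sum>k<K. \<omega> k) + N\<^sup>2 * ((e - \<eta>) \<bullet> (x - v) + (\<Sum>k\<in>A. \<gamma> k * (\<alpha> k \<bullet> x)))"
proof -
  define q where "q y = e \<bullet> y - (1/2) * (y \<bullet> y)" for y
  have "exp_objective \<omega> \<alpha> K (N *\<^sub>R e) (N *\<^sub>R v) + (1/2) * (norm (N *\<^sub>R v - N *\<^sub>R x))\<^sup>2
      \<le> exp_objective \<omega> \<alpha> K (N *\<^sub>R e) (N *\<^sub>R x)"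
    using \<omega> max by (rule exp_objective_maximizer_gap)
  moreover have "(norm (N *\<^sub>R v - N *\<^sub>R x))\<^sup>2 = N\<^sup>2 * (norm (x - v))\<^sup>2"
    by (simp add: norm_minus_commute power_mult_distrib flip: scaleR_diff_right)
  moreover have "- (\<Sum>k<K. \<omega> k) + N\<^sup>2 * q v \<le> exp_objective \<omega> \<alpha> K (N *\<^sub>R e) (N *\<^sub>R v)"
    unfolding q_def using \<omega> \<open>N \<ge> 0\<close> v by (rule exp_objective_scaleR_polar_cone_ge)
  moreover have "(\<Sum>k\<in>A. \<omega> k * exp (N * (\<alpha> k \<bullet> x))) \<le> (\<Sum>k<K. \<omega> k * exp (N * (\<alpha> k \<bullet> x)))"
    using A \<omega> by (intro sum_mono2) (auto simp: active_set_def)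
  moreover have q_diff: "q x - q v
      = (e - \<eta>) \<bullet> (x - v) + (\<Sum>k\<in>A. \<gamma> k * (\<alpha> k \<bullet> x)) - (1/2) * (norm (x - v))\<^sup>2"
  proof -
    have "(\<eta> - v) \<bullet> v = 0"
      using A by (auto simp: res inner_sum_left active_set_def intro!: sum.neutral)
    moreover have "(\<eta> - v) \<bullet> x = (\<Sum>k\<in>A. \<gamma> k * (\<alpha> k \<bullet> x))"
      by (simp add: res inner_sum_left)
    ultimately show ?thesis
      by (simp add: q_def power2_norm_eq_inner inner_diff_left inner_diff_right inner_commute
          algebra_simps)
  qed
  moreover have "N\<^sup>2 * q x - N\<^sup>2 * q v = N\<^sup>2 * ((e - \<eta>) \<bullet> (x - v) + (\<Sum>k\<in>A. \<gamma> k * (\<alpha> k \<bullet> x)))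
      - (1/2) * (N\<^sup>2 * (norm (x - v))\<^sup>2)"
    unfolding right_diff_distrib[symmetric] q_diff by (simp add: algebra_simps)
  ultimately show ?thesis
    by (simp add: exp_objective_scaleR q_def)
qed

lemma scaled_maximizer_sq_dist_bound:
  fixes \<alpha> :: "nat \<Rightarrow> 'a::euclidean_space"
  assumes \<omega>: "\<And>k. k < K \<Longrightarrow> \<omega> k > 0" and "N > 0"
    and max: "\<And>y. exp_objective \<omega> \<alpha> K (N *\<^sub>R e) y \<le> exp_objective \<omega> \<alpha> K (N *\<^sub>R e) (N *\<^sub>R x)"
    and v: "v \<in> polar_cone \<alpha> K" and A: "A \<subseteq> active_set \<alpha> K v"
    and \<gamma>: "\<And>k. k \<in> A \<Longrightarrow> \<gamma> k \<ge> 0" and res: "\<eta> - v = (\<Sum>k\<in>A. \<gamma> k *\<^sub>R \<alpha> k)"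
  shows "(norm (x - v))\<^sup>2
           \<le> 2 * ((\<Sum>k<K. \<omega> k) / N\<^sup>2 + (\<Sum>k\<in>A. \<gamma> k * ln (\<gamma> k * N / \<omega> k) / N)) + (norm (e - \<eta>))\<^sup>2"
proof -
  have "N\<^sup>2 * (norm (x - v))\<^sup>2 + (\<Sum>k\<in>A. \<omega> k * exp (N * (\<alpha> k \<bullet> x)))
      \<le> (\<Sum>k<K. \<omega> k) + N\<^sup>2 * ((e - \<eta>) \<bullet> (x - v) + (\<Sum>k\<in>A. \<gamma> k * (\<alpha> k \<bullet> x)))"
    using \<omega> \<open>N > 0\<close> max v A res by (intro scaled_maximizer_sq_dist_le) (auto simp: less_imp_le)
  then have "(N\<^sup>2 * (norm (x - v))\<^sup>2 + (\<Sum>k\<in>A. \<omega> k * exp (N * (\<alpha> k \<bullet> x)))) / N\<^sup>2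
      \<le> ((\<Sum>k<K. \<omega> k) + N\<^sup>2 * ((e - \<eta>) \<bullet> (x - v) + (\<Sum>k\<in>A. \<gamma> k * (\<alpha> k \<bullet> x)))) / N\<^sup>2"
    by (rule divide_right_mono) simp
  then have "(norm (x - v))\<^sup>2 \<le> (\<Sum>k<K. \<omega> k) / N\<^sup>2 + (e - \<eta>) \<bullet> (x - v)
      + (\<Sum>k\<in>A. \<gamma> k * (\<alpha> k \<bullet> x) - \<omega> k * exp (N * (\<alpha> k \<bullet> x)) / N\<^sup>2)"
    using \<open>N > 0\<close> by (simp add: add_divide_distrib sum_subtractf sum_divide_distrib)
  moreover have "(\<Sum>k\<in>A. \<gamma> k * (\<alpha> k \<bullet> x) - \<omega> k * exp (N * (\<alpha> k \<bullet> x)) / N\<^sup>2)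
      \<le> (\<Sum>k\<in>A. \<gamma> k * ln (\<gamma> k * N / \<omega> k) / N)"
    using A \<omega> \<gamma> \<open>N > 0\<close> by (intro sum_mono exp_penalty_le) (auto simp: active_set_def)
  moreover have "(e - \<eta>) \<bullet> (x - v) \<le> ((norm (e - \<eta>))\<^sup>2 + (norm (x - v))\<^sup>2) / 2"
    using norm_cauchy_schwarz[of "e - \<eta>" "x - v"] sum_squares_bound[of "norm (e - \<eta>)" "norm (x - v)"]
    by (simp add: field_simps)
  ultimately show ?thesis by argo
qed

lemma lim_const_over_n_squared: "(\<lambda>n. c / (real n)\<^sup>2) \<longlonglongrightarrow> 0"
proof -
  have "(\<lambda>n. c / real n * (1 / real n)) \<longlonglongrightarrow> 0 * 0"
    by (intro tendsto_mult lim_const_over_n)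
  then show ?thesis by (simp add: power2_eq_square)
qed

lemma scaled_maximizer_tendsto:
  fixes \<alpha> :: "nat \<Rightarrow> 'a::euclidean_space"
  assumes \<omega>: "\<And>k. k < K \<Longrightarrow> \<omega> k > 0" and e: "e \<longlonglongrightarrow> \<eta>"
    and max: "\<And>n y. n > 0 \<Longrightarrow>
      exp_objective \<omega> \<alpha> K (real n *\<^sub>R e n) y \<le> exp_objective \<omega> \<alpha> K (real n *\<^sub>R e n) (real n *\<^sub>R x n)"
  shows "x \<longlonglongrightarrow> closest_point (polar_cone \<alpha> K) \<eta>"
proof -
  define v where "v = closest_point (polar_cone \<alpha> K) \<eta>"
  define A where "A = active_set \<alpha> K v"
  obtain \<gamma> where \<gamma>: "\<forall>k\<in>A. \<gamma> k \<ge> 0" and res: "\<eta> - v = (\<Sum>k\<in>A. \<gamma> k *\<^sub>R \<alpha> k)"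
    using closest_point_polar_cone_residual unfolding v_def A_def by blast
  define b where "b n = 2 * ((\<Sum>k<K. \<omega> k) / (real n)\<^sup>2
    + (\<Sum>k\<in>A. \<gamma> k * ln (\<gamma> k * real n / \<omega> k) / real n)) + (norm (e n - \<eta>))\<^sup>2" for n
  have bound: "\<forall>\<^sub>F n in sequentially. (norm (x n - v))\<^sup>2 \<le> b n"
    using eventually_gt_at_top[of 0]
  proof eventually_elim
    case (elim n)
    show ?case
      unfolding b_def using \<omega> elim max[OF elim] \<gamma> res closest_point_in_polar_cone
      by (intro scaled_maximizer_sq_dist_bound) (auto simp: v_def A_def)
  qed
  note W = lim_const_over_n_squared[of "\<Sum>k<K. \<omega> k"]
  have pen: "(\<lambda>n. \<Sum>k\<in>A. \<gamma> k * ln (\<gamma> k * real n / \<omega> k) / real n) \<longlonglongrightarrow> 0"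
  proof (rule tendsto_null_sum)
    fix k assume "k \<in> A"
    then have "k < K" using active_set_subset unfolding A_def by blast
    with \<open>k \<in> A\<close> show "(\<lambda>n. \<gamma> k * ln (\<gamma> k * real n / \<omega> k) / real n) \<longlonglongrightarrow> 0"
      using \<omega> \<gamma> by (intro exp_penalty_bound_tendsto_zero) auto
  qed
  have "(\<lambda>n. (norm (e n - \<eta>))\<^sup>2) \<longlonglongrightarrow> 0"
    using tendsto_power[OF tendsto_norm_zero[OF LIM_zero[OF e]], of 2] by simp
  then have "b \<longlonglongrightarrow> 2 * (0 + 0) + 0"
    unfolding b_def by (intro tendsto_add tendsto_mult_left W pen)
  then have "(\<lambda>n. sqrt (b n)) \<longlonglongrightarrow> 0"
    using tendsto_real_sqrt[of b 0] by simp
  have "\<forall>\<^sub>F n in sequentially. norm (x n - v) \<le> sqrt (b n)"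
    using bound by eventually_elim (rule real_le_rsqrt)
  then have "(\<lambda>n. x n - v) \<longlonglongrightarrow> 0"
    using \<open>(\<lambda>n. sqrt (b n)) \<longlonglongrightarrow> 0\<close> by (rule Lim_null_comparison)
  then show ?thesis
    unfolding v_def by (rule LIM_zero_cancel)
qed

lemma scaled_maximum_tendsto:
  fixes \<alpha> :: "nat \<Rightarrow> 'a::euclidean_space"
  assumes \<omega>: "\<And>k. k < K \<Longrightarrow> \<omega> k \<ge> 0" and e: "e \<longlonglongrightarrow> \<eta>" and x: "x \<longlonglongrightarrow> v"
    and v: "v \<in> polar_cone \<alpha> K" and orth: "(\<eta> - v) \<bullet> v = 0"
    and max: "\<And>n y. n > 0 \<Longrightarrow>
      exp_objective \<omega> \<alpha> K (real n *\<^sub>R e n) y \<le> exp_objective \<omega> \<alpha> K (real n *\<^sub>R e n) (real n *\<^sub>R x n)"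
  shows "(\<lambda>n. exp_objective \<omega> \<alpha> K (real n *\<^sub>R e n) (real n *\<^sub>R x n) / (real n)\<^sup>2)
           \<longlonglongrightarrow> (1/2) * (norm v)\<^sup>2"
proof -
  define F where "F n = exp_objective \<omega> \<alpha> K (real n *\<^sub>R e n) (real n *\<^sub>R x n)" for n
  define W where "W = (\<Sum>k<K. \<omega> k)"
  have lower: "\<forall>\<^sub>F n in sequentially. - (W / (real n)\<^sup>2) + (e n \<bullet> v - (1/2) * (v \<bullet> v)) \<le> F n / (real n)\<^sup>2"
    using eventually_gt_at_top[of 0]
  proof eventually_elim
    case (elim n)
    have "- W + (real n)\<^sup>2 * (e n \<bullet> v - (1/2) * (v \<bullet> v)) \<le> F n"
      using exp_objective_scaleR_polar_cone_ge[OF \<omega> _ v, where N = "real n" and e = "e n"] max[OF elim]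
      unfolding F_def W_def by (meson of_nat_0_le_iff order_trans)
    then have "(- W + (real n)\<^sup>2 * (e n \<bullet> v - (1/2) * (v \<bullet> v))) / (real n)\<^sup>2 \<le> F n / (real n)\<^sup>2"
      by (rule divide_right_mono) simp
    then show ?case using elim by (simp add: add_divide_distrib diff_divide_distrib)
  qed
  have upper: "\<forall>\<^sub>F n in sequentially. F n / (real n)\<^sup>2 \<le> e n \<bullet> x n - (1/2) * (x n \<bullet> x n)"
    using eventually_gt_at_top[of 0]
  proof eventually_elim
    case (elim n)
    have "F n \<le> (real n)\<^sup>2 * (e n \<bullet> x n - (1/2) * (x n \<bullet> x n))"
      unfolding F_def using \<omega> by (rule exp_objective_scaleR_le)
    then show ?case using elim by (simp add: divide_le_eq mult.commute)
  qed
  have "(\<lambda>n. - (W / (real n)\<^sup>2) + (e n \<bullet> v - (1/2) * (v \<bullet> v)))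
      \<longlonglongrightarrow> - 0 + (\<eta> \<bullet> v - (1/2) * (v \<bullet> v))"
    by (intro tendsto_add tendsto_minus lim_const_over_n_squared tendsto_diff tendsto_inner e tendsto_const)
  moreover have "(\<lambda>n. e n \<bullet> x n - (1/2) * (x n \<bullet> x n)) \<longlonglongrightarrow> \<eta> \<bullet> v - (1/2) * (v \<bullet> v)"
    by (intro tendsto_diff tendsto_mult tendsto_inner e x tendsto_const)
  ultimately have "(\<lambda>n. F n / (real n)\<^sup>2) \<longlonglongrightarrow> \<eta> \<bullet> v - (1/2) * (v \<bullet> v)"
    using tendsto_sandwich[OF lower upper] by simp
  moreover have "\<eta> \<bullet> v - (1/2) * (v \<bullet> v) = (1/2) * (norm v)\<^sup>2"
    using orth by (simp add: power2_norm_eq_inner inner_diff_left)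
  ultimately show ?thesis unfolding F_def by metis
qed

lemma exp_objective_maximizer_asymptotics:
  fixes \<alpha> :: "nat \<Rightarrow> 'a::euclidean_space" and K :: nat and \<eta> :: 'a
  defines "v \<equiv> closest_point (polar_cone \<alpha> K) \<eta>"
  assumes \<omega>: "\<And>k. k < K \<Longrightarrow> \<omega> k > 0" and e: "(\<lambda>n. \<eta>s n /\<^sub>R real n) \<longlonglongrightarrow> \<eta>"
    and max: "\<And>n y. exp_objective \<omega> \<alpha> K (\<eta>s n) y \<le> exp_objective \<omega> \<alpha> K (\<eta>s n) (\<theta> n)"
  shows "(\<lambda>n. \<theta> n /\<^sub>R real n) \<longlonglongrightarrow> v"
    and "(\<lambda>n. exp_objective \<omega> \<alpha> K (\<eta>s n) (\<theta> n) / (real n)\<^sup>2) \<longlonglongrightarrow> (1/2) * (norm v)\<^sup>2"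
proof -
  have scaled: "real n *\<^sub>R (\<eta>s n /\<^sub>R real n) = \<eta>s n" "real n *\<^sub>R (\<theta> n /\<^sub>R real n) = \<theta> n"
    if "n > 0" for n
    using that by simp_all
  have scaled_max: "exp_objective \<omega> \<alpha> K (real n *\<^sub>R (\<eta>s n /\<^sub>R real n)) y
      \<le> exp_objective \<omega> \<alpha> K (real n *\<^sub>R (\<eta>s n /\<^sub>R real n)) (real n *\<^sub>R (\<theta> n /\<^sub>R real n))"
    if "n > 0" for n y
    unfolding scaled[OF that] by (rule max)
  show x: "(\<lambda>n. \<theta> n /\<^sub>R real n) \<longlonglongrightarrow> v"
    unfolding v_def using \<omega> e scaled_max by (rule scaled_maximizer_tendsto)
  have "(\<lambda>n. exp_objective \<omega> \<alpha> K (real n *\<^sub>R (\<eta>s n /\<^sub>R real n)) (real n *\<^sub>R (\<theta> n /\<^sub>R real n))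
      / (real n)\<^sup>2) \<longlonglongrightarrow> (1/2) * (norm v)\<^sup>2"
    using \<omega> e x closest_point_in_polar_cone closest_point_polar_cone_orthogonal scaled_max
    unfolding v_def by (intro scaled_maximum_tendsto) (auto simp: less_imp_le)
  moreover have "\<forall>\<^sub>F n in sequentially. exp_objective \<omega> \<alpha> K (real n *\<^sub>R (\<eta>s n /\<^sub>R real n))
      (real n *\<^sub>R (\<theta> n /\<^sub>R real n)) / (real n)\<^sup>2 = exp_objective \<omega> \<alpha> K (\<eta>s n) (\<theta> n) / (real n)\<^sup>2"
    using eventually_gt_at_top[of 0] by eventually_elim (simp add: scaled)
  ultimately show "(\<lambda>n. exp_objective \<omega> \<alpha> K (\<eta>s n) (\<theta> n) / (real n)\<^sup>2) \<longlonglongrightarrow> (1/2) * (norm v)\<^sup>2"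
    by (rule Lim_transform_eventually)
qed

theorem proposition4:
  fixes \<alpha> :: "nat \<Rightarrow> 'a::euclidean_space" and K :: nat
  assumes "\<forall>k<K. \<alpha> k \<noteq> 0"
  shows
    "(\<forall>\<eta>::'a. \<eta> \<noteq> 0 \<longrightarrow> (\<exists>S. admissible \<alpha> K \<eta> S))
     \<and> (\<forall>\<eta> S S'. \<eta> \<noteq> 0 \<longrightarrow> admissible \<alpha> K \<eta> S \<longrightarrow> admissible \<alpha> K \<eta> S' \<longrightarrow>
          orth_proj (orthogonal_comp (span (\<alpha> ` S))) \<eta>
          = orth_proj (orthogonal_comp (span (\<alpha> ` S'))) \<eta>)
     \<and> continuous_on (- {0}) (canon_proj \<alpha> K)
     \<and> (\<forall>(\<omega>::nat \<Rightarrow> real) (\<eta>s::nat \<Rightarrow> 'a) (\<eta>::'a) (\<theta>::nat \<Rightarrow> 'a) (f::nat \<Rightarrow> 'a \<Rightarrow> real).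
          (\<forall>k<K. \<omega> k > 0) \<longrightarrow>
          ((\<lambda>n. \<eta>s n /\<^sub>R real n) \<longlonglongrightarrow> \<eta>) \<longrightarrow> \<eta> \<noteq> 0 \<longrightarrow>
          (\<forall>n x. f n x = - (\<Sum>k<K. \<omega> k * exp (\<alpha> k \<bullet> x)) + \<eta>s n \<bullet> x - (1/2) * (x \<bullet> x)) \<longrightarrow>
          (\<forall>n x. x \<noteq> \<theta> n \<longrightarrow> f n x < f n (\<theta> n)) \<longrightarrow>
          ((\<lambda>n. \<theta> n /\<^sub>R real n) \<longlonglongrightarrow> canon_proj \<alpha> K \<eta>) \<and>
          ((\<lambda>n. f n (\<theta> n) / (real n)^2) \<longlonglongrightarrow> (1/2) * (norm (canon_proj \<alpha> K \<eta>))^2))"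
proof (intro conjI allI impI)
  fix \<eta> :: 'a
  show "\<exists>S. admissible \<alpha> K \<eta> S"
    using admissible_active_set by blast
next
  fix \<eta> :: 'a and S S'
  assume "admissible \<alpha> K \<eta> S" "admissible \<alpha> K \<eta> S'"
  then show "orth_proj (orthogonal_comp (span (\<alpha> ` S))) \<eta> = orth_proj (orthogonal_comp (span (\<alpha> ` S'))) \<eta>"
    by (simp add: admissible_orth_proj_eq_closest_point)
next
  show "continuous_on (- {0}) (canon_proj \<alpha> K)"
    unfolding canon_proj_eq_closest_point using zero_in_polar_cone
    by (intro continuous_on_closest_point convex_polar_cone closed_polar_cone) blast
next
  fix \<omega> :: "nat \<Rightarrow> real" and \<eta>s :: "nat \<Rightarrow> 'a" and \<eta> :: 'a and \<theta> :: "nat \<Rightarrow> 'a"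
    and f :: "nat \<Rightarrow> 'a \<Rightarrow> real"
  assume \<omega>: "\<forall>k<K. \<omega> k > 0" and e: "(\<lambda>n. \<eta>s n /\<^sub>R real n) \<longlonglongrightarrow> \<eta>"
    and "\<forall>n x. f n x = - (\<Sum>k<K. \<omega> k * exp (\<alpha> k \<bullet> x)) + \<eta>s n \<bullet> x - (1/2) * (x \<bullet> x)"
    and max: "\<forall>n x. x \<noteq> \<theta> n \<longrightarrow> f n x < f n (\<theta> n)"
  then have f: "f n = exp_objective \<omega> \<alpha> K (\<eta>s n)" for n
    by (auto simp: exp_objective_def)
  have "exp_objective \<omega> \<alpha> K (\<eta>s n) y \<le> exp_objective \<omega> \<alpha> K (\<eta>s n) (\<theta> n)" for n y
    using max by (cases "y = \<theta> n") (auto simp: f less_imp_le)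
  from exp_objective_maximizer_asymptotics[OF _ e this] \<omega>
  show "(\<lambda>n. \<theta> n /\<^sub>R real n) \<longlonglongrightarrow> canon_proj \<alpha> K \<eta>"
    and "(\<lambda>n. f n (\<theta> n) / (real n)\<^sup>2) \<longlonglongrightarrow> (1/2) * (norm (canon_proj \<alpha> K \<eta>))\<^sup>2"
    by (simp_all add: f canon_proj_eq_closest_point)
qed

end
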